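(* Let $\mathcal H$ be a Hilbert space, $\mathcal T,\widehat{\mathcal T}:\mathcal H\to\mathcal H$ bounded linear operators and $q,p,\widehat q,\widehat p\in\mathcal H$, and let $\Delta_{\mathcal T},\Delta_p,\Delta_q\ge0$ satisfy $\|\widehat{\mathcal T}-\mathcal T\|\le\Delta_{\mathcal T}$, $\|\widehat p-p\|\le\Delta_p$, $\|\widehat q-q\|\le\Delta_q$. For $\lambda>0$ let $\widehat\theta_\lambda$ be any minimizer over $\theta'\in\mathcal H$ of $\|\widehat{\mathcal T}\theta'-\widehat q+\widehat p\|+\lambda\|\theta'\|$. Then $$\|\mathcal T\widehat\theta_\lambda-q+p\|\le\max\Big\{1,\frac{\Delta_{\mathcal T}}{\lambda}\Big\}\inf_{\theta'\in\mathcal H}\Big(\|\mathcal T\theta'-q+p\|+(\Delta_{\mathcal T}+\lambda)\|\theta'\|\Big)+\max\Big\{2,1+\frac{\Delta_{\mathcal T}}{\lambda}\Big\}(\Delta_q+\Delta_p).$$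
   Context: $\|\cdot\|$ denotes the Hilbert space norm on elements and the operator norm on operators. *)

theory Defs
  imports "HOL-Analysis.Analysis"
begin

end

theory Submission
  imports Defs
begin

text \<open>At every \<open>\<theta>\<close> the perturbed residual differs from the true one by at most
  \<open>\<Delta>\<^sub>T \<parallel>\<theta>\<parallel> + \<Delta>\<^sub>q + \<Delta>\<^sub>p\<close>.  Pass from the true residual at the minimizer to the perturbed
  objective there, compare with an arbitrary \<open>\<theta>'\<close> by minimality, and return to the true
  residual at \<open>\<theta>'\<close>.  The operator error at the minimizer, \<open>\<Delta>\<^sub>T \<parallel>\<theta>\<^sub>\<lambda>\<parallel>\<close>, is paid for by the
  penalty \<open>\<lambda> \<parallel>\<theta>\<^sub>\<lambda>\<parallel>\<close> once the objective is scaled by \<open>max 1 (\<Delta>\<^sub>T/\<lambda>)\<close>.\<close>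

lemma norm_residual_diff_le:
  fixes A B :: "'a::real_normed_vector \<Rightarrow>\<^sub>L 'b::real_normed_vector"
  shows "norm ((B x - v) - (A x - u)) \<le> norm (B - A) * norm x + norm (v - u)"
proof -
  have "(B x - v) - (A x - u) = (B - A) x - (v - u)"
    by (simp add: blinfun.diff_left)
  also have "norm \<dots> \<le> norm ((B - A) x) + norm (v - u)"
    by (rule norm_triangle_ineq4)
  also have "\<dots> \<le> norm (B - A) * norm x + norm (v - u)"
    using norm_blinfun by simp
  finally show ?thesis .
qed

lemma penalized_minimizer_oracle_bound:
  fixes f g n :: "'a \<Rightarrow> real"
  assumes lam: "lam > 0"
    and g_nonneg: "g th \<ge> 0"
    and n_nonneg: "\<And>x. n x \<ge> 0"
    and close: "\<And>x. \<bar>f x - g x\<bar> \<le> D * n x + d"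
    and minimizer: "\<And>x. g th + lam * n th \<le> g x + lam * n x"
  shows "f th \<le> max 1 (D / lam) * (f t + (D + lam) * n t) + (max 1 (D / lam) + 1) * d"
proof -
  define M where "M = max 1 (D / lam)"
  have "M \<ge> 1" unfolding M_def by simp
  have "D \<le> M * lam"
    using lam unfolding M_def by (simp add: pos_divide_le_eq max_def)
  then have "D * n th \<le> M * lam * n th"
    using n_nonneg by (simp add: mult_right_mono)
  moreover have "g th \<le> M * g th"
    using \<open>M \<ge> 1\<close> g_nonneg by (simp add: mult_le_cancel_right1)
  ultimately have "f th \<le> M * (g th + lam * n th) + d"
    using close[of th] by (simp add: algebra_simps)
  also have "\<dots> \<le> M * (g t + lam * n t) + d"
    using minimizer[of t] \<open>M \<ge> 1\<close> by simp
  also have "\<dots> \<le> M * (f t + (D + lam) * n t + d) + d"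
  proof -
    have "g t + lam * n t \<le> f t + (D + lam) * n t + d"
      using close[of t] by (simp add: algebra_simps)
    then show ?thesis
      using \<open>M \<ge> 1\<close> by simp
  qed
  finally show ?thesis
    unfolding M_def by (simp add: algebra_simps)
qed

lemma le_mult_INF_add:
  fixes h :: "'a \<Rightarrow> real"
  assumes "M > 0" and "\<And>t. c \<le> M * h t + e"
  shows "c \<le> M * (INF t. h t) + e"
proof -
  have "(c - e) / M \<le> (INF t. h t)"
  proof (rule cINF_greatest)
    fix t
    show "(c - e) / M \<le> h t"
      using assms(1) assms(2)[of t] by (simp add: pos_divide_le_eq mult.commute)
  qed simp
  then show ?thesis
    using assms(1) by (simp add: pos_divide_le_eq mult.commute)
qed

theorem lemma8:
  fixes T T_hat :: "'a::{real_inner, complete_space} \<Rightarrow>\<^sub>L 'a"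
    and q p q_hat p_hat theta_hat :: 'a
    and \<Delta>T \<Delta>p \<Delta>q lam :: real
  assumes "\<Delta>T \<ge> 0" and "\<Delta>p \<ge> 0" and "\<Delta>q \<ge> 0"
    and "norm (T_hat - T) \<le> \<Delta>T"
    and "norm (p_hat - p) \<le> \<Delta>p"
    and "norm (q_hat - q) \<le> \<Delta>q"
    and "lam > 0"
    and "\<forall>\<theta>'. norm (T_hat theta_hat - q_hat + p_hat) + lam * norm theta_hat
                \<le> norm (T_hat \<theta>' - q_hat + p_hat) + lam * norm \<theta>'"
  shows "norm (T theta_hat - q + p)
         \<le> max 1 (\<Delta>T / lam) * (INF \<theta>'. norm (T \<theta>' - q + p) + (\<Delta>T + lam) * norm \<theta>')
           + max 2 (1 + \<Delta>T / lam) * (\<Delta>q + \<Delta>p)"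
proof -
  have close: "\<bar>norm (T x - q + p) - norm (T_hat x - q_hat + p_hat)\<bar> \<le> \<Delta>T * norm x + (\<Delta>q + \<Delta>p)"
    for x
  proof -
    have "norm ((q_hat - p_hat) - (q - p)) \<le> \<Delta>q + \<Delta>p"
      using norm_triangle_ineq4[of "q_hat - q" "p_hat - p"] assms(5,6) by (simp add: algebra_simps)
    then have "norm ((T_hat x - (q_hat - p_hat)) - (T x - (q - p))) \<le> \<Delta>T * norm x + (\<Delta>q + \<Delta>p)"
      using norm_residual_diff_le[of T_hat x "q_hat - p_hat" T "q - p"]
        mult_right_mono[OF assms(4) norm_ge_zero[of x]] by linarith
    then show ?thesis
      using norm_triangle_ineq3[of "T x - q + p" "T_hat x - q_hat + p_hat"]
      by (simp add: norm_minus_commute diff_diff_eq2 algebra_simps)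
  qed
  have "max 2 (1 + \<Delta>T / lam) = max 1 (\<Delta>T / lam) + 1"
    by (simp add: max_def)
  moreover have "norm (T theta_hat - q + p)
      \<le> max 1 (\<Delta>T / lam) * (norm (T t - q + p) + (\<Delta>T + lam) * norm t)
        + (max 1 (\<Delta>T / lam) + 1) * (\<Delta>q + \<Delta>p)" for t
    by (rule penalized_minimizer_oracle_bound[where g = "\<lambda>x. norm (T_hat x - q_hat + p_hat)"])
      (use assms(7,8) close in auto)
  ultimately show ?thesis
    by (simp add: le_mult_INF_add)
qed

end
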